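(* Fix a state $\bm{s}$ and let $\mathcal{A}=\mathcal{A}(\bm{s})\subseteq\{0,1\}^m$ be a finite nonempty set. Let $\bm{a}^\star(\bm{s},\cdot):\mathbb{S}^{m-1}\to\mathcal{A}$ be the solver mapping, $\bm{a}^\star(\bm{s},\bm{c})\in\operatorname*{argmin}_{\bm{a}\in\mathcal{A}}\bm{c}^\top\bm{a}$, where ties are broken by a fixed deterministic rule (so that $\bm{a}^\star(\bm{s},\cdot)$ is a well-defined Borel measurable function). Then for every probability distribution $\mu$ on $\mathcal{A}$ there exists a Borel probability distribution $\pi$ on $\mathbb{S}^{m-1}$ such that, if $\bm{c}\sim\pi$, then \[ \mathbb{P}\big[\bm{a}^\star(\bm{s},\bm{c})=\bm{a}\big]=\mu(\bm{a})\qquad\text{for all }\bm{a}\in\mathcal{A}. \]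
   Context: $\mathbb{S}^{m-1}=\{\bm{c}\in\mathbb{R}^m:\|\bm{c}\|_2=1\}$ is the unit sphere. Feasible actions are binary vectors in $\{0,1\}^m$. *)

theory Defs
  imports "HOL-Analysis.Analysis" "HOL-Probability.Probability"
begin

definition binary_vecs :: "(real ^ 'n) set" where
  "binary_vecs = {x. \<forall>i. x $ i \<in> {0, 1}}"

end

theory Submission
  imports Defs
begin

text \<open>Every binary vector \<open>a\<close> is the unique minimiser of the linear cost \<open>c \<bullet> x\<close> over all
  binary vectors when \<open>c\<close> has entry \<open>1\<close> where \<open>a\<close> is \<open>0\<close> and \<open>-1\<close> where \<open>a\<close> is \<open>1\<close>; normalised, this
  \<open>c\<close> lies on the sphere. Pushing \<open>\<mu>\<close> forward along \<open>a \<mapsto> c\<close> therefore gives a distribution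
  \<open>\<pi>\<close> under which the solver returns \<open>a\<close> exactly with probability \<open>\<mu>(a)\<close>, whatever its
  tie-breaking rule.\<close>

definition vertex_cost :: "real ^ 'n \<Rightarrow> real ^ 'n" where
  "vertex_cost x = (\<chi> i. if x $ i = 0 then 1 else -1)"

definition vertex_direction :: "real ^ 'n \<Rightarrow> real ^ 'n" where
  "vertex_direction x = vertex_cost x /\<^sub>R norm (vertex_cost x)"

lemma vertex_cost_nonzero: "vertex_cost x \<noteq> 0"
proof
  assume "vertex_cost x = 0"
  then have "vertex_cost x $ undefined = 0" by simp
  then show False by (simp add: vertex_cost_def split: if_splits)
qed

lemma vertex_direction_in_sphere: "vertex_direction x \<in> sphere 0 1"
  using vertex_cost_nonzero[of x] by (simp add: vertex_direction_def)

lemma vertex_cost_strict_minimizer: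
  assumes "x \<in> binary_vecs" "y \<in> binary_vecs" "y \<noteq> x"
  shows "vertex_cost x \<bullet> x < vertex_cost x \<bullet> y"
proof -
  obtain j where j: "y $ j \<noteq> x $ j"
    using assms(3) by (metis vec_eq_iff)
  have nonneg: "vertex_cost x $ i * (y $ i - x $ i) \<ge> 0" for i
    using assms(1,2) unfolding binary_vecs_def vertex_cost_def by (auto dest!: spec[of _ i])
  have pos: "vertex_cost x $ j * (y $ j - x $ j) > 0"
    using assms(1,2) j unfolding binary_vecs_def vertex_cost_def by (auto dest!: spec[of _ j])
  have "0 < (\<Sum>i\<in>UNIV. vertex_cost x $ i * (y $ i - x $ i))"
    by (rule sum_pos2[of UNIV j]) (use nonneg pos in auto)
  also have "\<dots> = vertex_cost x \<bullet> y - vertex_cost x \<bullet> x"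
    by (simp add: inner_vec_def right_diff_distrib sum_subtractf)
  finally show ?thesis by simp
qed

lemma argmin_at_vertex_direction:
  assumes "A \<subseteq> binary_vecs" "a \<in> A"
    and "b \<in> A" "\<forall>x \<in> A. vertex_direction a \<bullet> b \<le> vertex_direction a \<bullet> x"
  shows "b = a"
proof (rule ccontr)
  assume "b \<noteq> a"
  then have "vertex_cost a \<bullet> a < vertex_cost a \<bullet> b"
    using assms(1-3) by (intro vertex_cost_strict_minimizer) auto
  then have "vertex_direction a \<bullet> a < vertex_direction a \<bullet> b"
    using vertex_cost_nonzero[of a] by (simp add: vertex_direction_def divide_strict_right_mono)
  then show False
    using assms(2,4) by fastforce
qed

lemma measure_distr_pmf_left_inverse:
  assumes f: "f \<in> space (measure_pmf \<mu>) \<rightarrow> space N"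
    and g_meas: "{c \<in> space N. g c = a} \<in> sets N"
    and g_f: "\<forall>x \<in> set_pmf \<mu>. g (f x) = x"
  shows "measure (distr (measure_pmf \<mu>) N f) {c \<in> space N. g c = a} = pmf \<mu> a"
proof -
  have f_meas: "f \<in> measurable (measure_pmf \<mu>) N"
    using f by simp
  have "measure (distr (measure_pmf \<mu>) N f) {c \<in> space N. g c = a}
      = measure (measure_pmf \<mu>) (f -` {c \<in> space N. g c = a} \<inter> set_pmf \<mu>)"
    by (simp add: measure_distr[OF f_meas g_meas] measure_Int_set_pmf)
  also have "f -` {c \<in> space N. g c = a} \<inter> set_pmf \<mu> = {a} \<inter> set_pmf \<mu>"
    using f g_f by auto
  also have "measure (measure_pmf \<mu>) ({a} \<inter> set_pmf \<mu>) = pmf \<mu> a"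
    by (simp add: measure_Int_set_pmf measure_pmf_single)
  finally show ?thesis .
qed

theorem proposition1:
  fixes A :: "(real ^ 'n) set"
    and astar :: "real ^ 'n \<Rightarrow> real ^ 'n"
  assumes "finite A" and "A \<noteq> {}" and "A \<subseteq> binary_vecs"
    and "\<forall>c \<in> sphere 0 1. astar c \<in> A \<and> (\<forall>a \<in> A. c \<bullet> astar c \<le> c \<bullet> a)"
    and "astar \<in> borel_measurable (restrict_space borel (sphere (0 :: real ^ 'n) 1))"
  shows "\<forall>\<mu> :: (real ^ 'n) pmf. set_pmf \<mu> \<subseteq> A \<longrightarrow>
           (\<exists>\<pi>. prob_space \<pi> \<and> sets \<pi> = sets (restrict_space borel (sphere (0 :: real ^ 'n) 1)) \<and>
                (\<forall>a \<in> A. measure \<pi> {c \<in> space \<pi>. astar c = a} = pmf \<mu> a))"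
proof (intro allI impI)
  fix \<mu> :: "(real ^ 'n) pmf"
  assume support: "set_pmf \<mu> \<subseteq> A"
  define N where "N = restrict_space borel (sphere (0 :: real ^ 'n) 1)"
  define \<pi> where "\<pi> = distr (measure_pmf \<mu>) N vertex_direction"
  have into_sphere: "vertex_direction \<in> space (measure_pmf \<mu>) \<rightarrow> space N"
    using vertex_direction_in_sphere by (auto simp: N_def space_restrict_space)
  have "astar (vertex_direction a) = a" if "a \<in> A" for a
    using assms(4) vertex_direction_in_sphere[of a]
    by (intro argmin_at_vertex_direction[OF assms(3) that]) blast+
  moreover have "{c \<in> space N. astar c = a} \<in> sets N" for a
    using assms(5) unfolding N_def by measurable
  ultimately have "measure \<pi> {c \<in> space \<pi>. astar c = a} = pmf \<mu> a" for a
    unfolding \<pi>_def using support into_sphere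
    by (subst space_distr, intro measure_distr_pmf_left_inverse) auto
  moreover have "prob_space \<pi>"
    unfolding \<pi>_def using into_sphere
    by (intro prob_space.prob_space_distr prob_space_measure_pmf) simp
  ultimately show "\<exists>\<pi>. prob_space \<pi> \<and> sets \<pi> = sets (restrict_space borel (sphere (0 :: real ^ 'n) 1)) \<and>
                (\<forall>a \<in> A. measure \<pi> {c \<in> space \<pi>. astar c = a} = pmf \<mu> a)"
    by (auto simp: \<pi>_def N_def)
qed

end
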